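(* The Banach space $Y$ (the predual of $\mathcal{F}(\mathcal{M})$ described in the context) is almost square: for every finite family $f_1,\dots,f_N\in S_Y$ and every $\varepsilon>0$ there exists $g\in S_Y$ with $\|f_i\pm g\|\le 1+\varepsilon$ for all $i=1,\dots,N$.
   Context: For a pointed metric space $M$, ${\mathrm{Lip}}_0(M)$ is the space of real Lipschitz functions vanishing at the base point, normed by the Lipschitz constant $\|\cdot\|_L$. A function $f$ on a metric space is locally flat if $\lim_{x,y\to z}\frac{f(x)-f(y)}{d(x,y)}=0$ for every $z$. Let $p=(0,0)$, $q=(1,0)$, $S_n=\{(2^{-n}k,2^{-n}):k=0,\dots,2^n\}$ for $n\in\mathbb{N}$, and $\mathcal{M}=\{p,q\}\cup\bigcup_n S_n$ with the metric $d((x_1,y_1),(x_2,y_2))=|x_1-x_2|$ if $y_1=y_2$ and $=|y_1-y_2|+\min\{x_1+x_2,2-(x_1+x_2)\}$ if $y_1\neq y_2$, base point $p$. Let $V=\{(x,y)\in\mathcal{M}:x\in\{0,1\}\}$, $h(x,y)=x$, and $Y=\{f\in{\mathrm{Lip}}_0(\mathcal{M}):\lim_n\|(f-f(q)h)|_{S_n}\|_L=0,\ f|_V\text{ locally flat}\}$ with the Lipschitz norm. *)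

theory Defs
  imports "HOL-Analysis.Analysis"
begin

type_synonym pt = "real \<times> real"

definition pP :: pt where "pP = (0, 0)"
definition qQ :: pt where "qQ = (1, 0)"

definition SS :: "nat \<Rightarrow> pt set" where
  "SS n = {(real k / 2 ^ n, 1 / 2 ^ n) | k. k \<le> 2 ^ n}"

text \<open>The metric space M (natural numbers taken as n >= 1).\<close>
definition MM :: "pt set" where
  "MM = {pP, qQ} \<union> (\<Union>n\<in>{1..}. SS n)"

definition dM :: "pt \<Rightarrow> pt \<Rightarrow> real" where
  "dM a b = (if snd a = snd b then \<bar>fst a - fst b\<bar>
             else \<bar>snd a - snd b\<bar> + min (fst a + fst b) (2 - (fst a + fst b)))"

definition lipc :: "pt set \<Rightarrow> (pt \<Rightarrow> real) \<Rightarrow> real" where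
  "lipc A f = (SUP z\<in>{(x, y). x \<in> A \<and> y \<in> A \<and> x \<noteq> y}.
                  \<bar>f (fst z) - f (snd z)\<bar> / dM (fst z) (snd z))"

definition Lip0 :: "(pt \<Rightarrow> real) set" where
  "Lip0 = {f. f pP = 0 \<and> (\<forall>z. z \<notin> MM \<longrightarrow> f z = 0) \<and>
             (\<exists>L. \<forall>x\<in>MM. \<forall>y\<in>MM. \<bar>f x - f y\<bar> \<le> L * dM x y)}"

definition VV :: "pt set" where
  "VV = {z \<in> MM. fst z = 0 \<or> fst z = 1}"

definition hh :: "pt \<Rightarrow> real" where "hh z = fst z"

definition locally_flat_on :: "pt set \<Rightarrow> (pt \<Rightarrow> real) \<Rightarrow> bool" where
  "locally_flat_on A f \<longleftrightarrow> (\<forall>z\<in>A. \<forall>e>0. \<exists>\<delta>>0. \<forall>x\<in>A. \<forall>y\<in>A.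
      x \<noteq> y \<and> dM x z < \<delta> \<and> dM y z < \<delta> \<longrightarrow> \<bar>f x - f y\<bar> \<le> e * dM x y)"

definition YY :: "(pt \<Rightarrow> real) set" where
  "YY = {f \<in> Lip0. (\<lambda>n. lipc (SS n) (\<lambda>z. f z - f qQ * hh z)) \<longlonglongrightarrow> 0
                 \<and> locally_flat_on VV f}"

definition almost_square :: "('a \<Rightarrow> real) set \<Rightarrow> (('a \<Rightarrow> real) \<Rightarrow> real) \<Rightarrow> bool" where
  "almost_square X nrm \<longleftrightarrow> (\<forall>F. finite F \<and> F \<subseteq> {f \<in> X. nrm f = 1} \<longrightarrow>
      (\<forall>\<epsilon>>0. \<exists>g\<in>X. nrm g = 1 \<and>
          (\<forall>f\<in>F. nrm (\<lambda>z. f z + g z) \<le> 1 + \<epsilon> \<and> nrm (\<lambda>z. f z - g z) \<le> 1 + \<epsilon>)))"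

end

theory Submission
  imports Defs
begin

text \<open>Fix E = min \<epsilon> 1. Local flatness at p on V gives one \<delta> for which all f_i are
  E-Lipschitz on V within \<delta> of p. The witness g is a tent of slope E and height 2^(-n-1) at
  the left end of a level S_n with 2^(-n) small compared with \<delta> and E: it has norm 1,
  vanishes on all other levels and is flat on V. For u on the tent level and v elsewhere,
  either d(u, v) is large compared with the height of the tent, or both points are close to
  the left axis, where f_i can be compared through the points (0, y) of V with constant E;
  in both cases |f_i(u) - f_i(v)| + |g(u) - g(v)| \<le> (1 + E) d(u, v).\<close>

lemma MM_cases:
  assumes "z \<in> MM"
  obtains "z = pP" | "z = qQ" | m k where "m \<ge> 1" "k \<le> 2^m" "z = (real k / 2^m, 1/2^m)"
  using assms unfolding MM_def SS_def by auto

lemma MM_coords: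
  assumes "z \<in> MM"
  shows "0 \<le> fst z" "fst z \<le> 1" "0 \<le> snd z"
proof -
  have "0 \<le> fst z \<and> fst z \<le> 1 \<and> 0 \<le> snd z"
  proof (cases rule: MM_cases[OF assms])
    case (3 m k)
    then have "real k \<le> 2^m"
      by (metis of_nat_le_iff of_nat_numeral of_nat_power)
    then show ?thesis using 3 by (simp add: field_simps)
  qed (auto simp: pP_def qQ_def)
  then show "0 \<le> fst z" "fst z \<le> 1" "0 \<le> snd z" by auto
qed

lemma pP_qQ_in_MM: "pP \<in> MM" "qQ \<in> MM" "pP \<noteq> qQ"
  unfolding MM_def pP_def qQ_def by auto

lemma level_point_in_MM:
  assumes "n \<ge> 1" "k \<le> 2^n"
  shows "(real k / 2^n, 1/2^n) \<in> MM"
  unfolding MM_def SS_def using assms by auto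

lemma axis_point_in_VV:
  assumes "z \<in> MM"
  shows "(0, snd z) \<in> VV"
proof -
  have "(0, snd z) \<in> MM"
  proof (cases rule: MM_cases[OF assms])
    case (3 m k)
    then show ?thesis using level_point_in_MM[of m 0] by simp
  qed (auto simp: pP_def qQ_def pP_qQ_in_MM[unfolded pP_def])
  then show ?thesis unfolding VV_def by simp
qed

lemma dM_sym: "dM a b = dM b a"
  unfolding dM_def by (auto simp: abs_minus_commute add.commute)

lemma dM_same_level: "snd u = snd v \<Longrightarrow> dM u v = \<bar>fst u - fst v\<bar>"
  unfolding dM_def by simp

lemma dM_axis: "dM (0, a) (0, b) = \<bar>a - b\<bar>"
  unfolding dM_def by simp

lemma dM_diff_level:
  assumes "snd u \<noteq> snd v" "fst u + fst v \<le> 1"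
  shows "dM u v = \<bar>snd u - snd v\<bar> + fst u + fst v"
  using assms unfolding dM_def by simp

lemma abs_snd_diff_le_dM:
  assumes "u \<in> MM" "v \<in> MM"
  shows "\<bar>snd u - snd v\<bar> \<le> dM u v"
  using MM_coords[OF assms(1)] MM_coords[OF assms(2)] unfolding dM_def by auto

lemma dM_nonneg: "u \<in> MM \<Longrightarrow> v \<in> MM \<Longrightarrow> 0 \<le> dM u v"
  using abs_snd_diff_le_dM by (smt (verit))

lemma dM_pos:
  assumes "u \<in> MM" "v \<in> MM" "u \<noteq> v"
  shows "0 < dM u v"
proof (cases "snd u = snd v")
  case True
  then have "fst u \<noteq> fst v" using assms(3) by (simp add: prod_eq_iff)
  then show ?thesis using True by (simp add: dM_same_level)
next
  case False
  then show ?thesis using abs_snd_diff_le_dM[OF assms(1,2)] by linarith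
qed

lemma fst_add_le_one_if_close:
  assumes "u \<in> MM" "v \<in> MM" "snd u \<noteq> snd v" "fst u \<le> 1/2" "dM u v < 1/2"
  shows "fst u + fst v \<le> 1"
proof (rule ccontr)
  assume "\<not> fst u + fst v \<le> 1"
  then have "dM u v = \<bar>snd u - snd v\<bar> + (2 - (fst u + fst v))"
    using assms(3) unfolding dM_def by simp
  then show False using assms(4,5) MM_coords(2)[OF assms(2)] by linarith
qed

lemma level_separation:
  assumes "v \<in> MM" "n \<ge> 1" "snd v \<noteq> 1/2^n"
  shows "1/2^(n+1) \<le> \<bar>1/2^n - snd v\<bar>"
proof (cases rule: MM_cases[OF assms(1)])
  case (3 m k)
  then have "m \<noteq> n" using assms(3) by auto
  then consider "m + 1 \<le> n" | "n + 1 \<le> m" by linarith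
  then show ?thesis
  proof cases
    case 1
    then have "(2::real)^(m+1) \<le> 2^n" by (intro power_increasing) auto
    then have "2/2^n \<le> (1::real)/2^m" by (simp add: field_simps)
    moreover have "1/2^(n+1) \<le> (1::real)/2^n" by (simp add: field_simps)
    ultimately show ?thesis using 3 by (simp add: abs_if)
  next
    case 2
    then have "(2::real)^(n+1) \<le> 2^m" by (intro power_increasing) auto
    then have "1/2^m \<le> (1::real)/2^(n+1)" by (simp add: field_simps)
    moreover have "(1::real)/2^n = 2 * (1/2^(n+1))" by simp
    ultimately show ?thesis using 3 by (simp add: abs_if)
  qed
qed (auto simp: pP_def qQ_def divide_simps)

lemma lipc_least:
  assumes "A \<subseteq> MM" "a \<in> A" "b \<in> A" "a \<noteq> b"
    and "\<And>x y. x \<in> A \<Longrightarrow> y \<in> A \<Longrightarrow> \<bar>f x - f y\<bar> \<le> L * dM x y"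
  shows "lipc A f \<le> L"
  unfolding lipc_def
proof (rule cSUP_least)
  show "{(x, y). x \<in> A \<and> y \<in> A \<and> x \<noteq> y} \<noteq> {}" using assms(2-4) by blast
next
  fix z assume "z \<in> {(x, y). x \<in> A \<and> y \<in> A \<and> x \<noteq> y}"
  then obtain x y where z: "z = (x, y)" "x \<in> A" "y \<in> A" "x \<noteq> y" by auto
  then have "0 < dM x y" using assms(1) dM_pos by blast
  then show "\<bar>f (fst z) - f (snd z)\<bar> / dM (fst z) (snd z) \<le> L"
    using assms(5)[OF z(2,3)] z(1) by (simp add: pos_divide_le_eq)
qed

lemma lipc_upper:
  assumes "A \<subseteq> MM" "x \<in> A" "y \<in> A" "x \<noteq> y"
    and "\<And>x y. x \<in> A \<Longrightarrow> y \<in> A \<Longrightarrow> \<bar>f x - f y\<bar> \<le> L * dM x y"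
  shows "\<bar>f x - f y\<bar> / dM x y \<le> lipc A f"
proof -
  let ?q = "\<lambda>z. \<bar>f (fst z) - f (snd z)\<bar> / dM (fst z) (snd z)"
  have "bdd_above (?q ` {(x, y). x \<in> A \<and> y \<in> A \<and> x \<noteq> y})"
  proof (rule bdd_aboveI2)
    fix z assume "z \<in> {(x, y). x \<in> A \<and> y \<in> A \<and> x \<noteq> y}"
    then obtain a b where z: "z = (a, b)" "a \<in> A" "b \<in> A" "a \<noteq> b" by auto
    then have "0 < dM a b" using assms(1) dM_pos by blast
    then show "?q z \<le> L" using assms(5)[OF z(2,3)] z(1) by (simp add: pos_divide_le_eq)
  qed
  then have "?q (x, y) \<le> lipc A f"
    unfolding lipc_def by (rule cSUP_upper[rotated]) (use assms(2-4) in auto)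
  then show ?thesis by simp
qed

lemma Lip0_lipschitz:
  assumes "f \<in> Lip0" "x \<in> MM" "y \<in> MM"
  shows "\<bar>f x - f y\<bar> \<le> lipc MM f * dM x y"
proof (cases "x = y")
  case False
  obtain L where "\<forall>x\<in>MM. \<forall>y\<in>MM. \<bar>f x - f y\<bar> \<le> L * dM x y"
    using assms(1) unfolding Lip0_def by auto
  then have "\<bar>f x - f y\<bar> / dM x y \<le> lipc MM f"
    using lipc_upper[of MM x y f L] assms(2,3) False by auto
  moreover have "0 < dM x y" using dM_pos assms(2,3) False by auto
  ultimately show ?thesis by (simp add: pos_divide_le_eq)
qed (simp add: dM_def)

lemma lipc_eq_0:
  assumes "a \<in> A" "b \<in> A" "a \<noteq> b" "\<And>x. x \<in> A \<Longrightarrow> f x = 0"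
  shows "lipc A f = 0"
proof -
  have "{(x, y). x \<in> A \<and> y \<in> A \<and> x \<noteq> y} \<noteq> {}" using assms(1-3) by blast
  moreover have "lipc A f = (SUP z\<in>{(x, y). x \<in> A \<and> y \<in> A \<and> x \<noteq> y}. 0::real)"
    unfolding lipc_def by (rule SUP_cong) (use assms(4) in auto)
  ultimately show ?thesis by simp
qed

definition lip_near :: "pt set \<Rightarrow> pt \<Rightarrow> real \<Rightarrow> real \<Rightarrow> (pt \<Rightarrow> real) \<Rightarrow> bool" where
  "lip_near A z E \<delta> f \<longleftrightarrow> (\<forall>x\<in>A. \<forall>y\<in>A.
      x \<noteq> y \<and> dM x z < \<delta> \<and> dM y z < \<delta> \<longrightarrow> \<bar>f x - f y\<bar> \<le> E * dM x y)"

lemma lip_near_mono: "lip_near A z E \<delta> f \<Longrightarrow> \<delta>' \<le> \<delta> \<Longrightarrow> lip_near A z E \<delta>' f"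
  unfolding lip_near_def by force

lemma locally_flat_on_uniform:
  assumes "finite F" "\<forall>f\<in>F. locally_flat_on A f" "z \<in> A" "0 < E"
  shows "\<exists>\<delta>>0. \<forall>f\<in>F. lip_near A z E \<delta> f"
proof -
  have "\<forall>\<^sub>F \<delta> in at_right 0. lip_near A z E \<delta> f" if "f \<in> F" for f
  proof -
    have "locally_flat_on A f" using assms(2) that by blast
    then have "\<exists>\<delta>>0. lip_near A z E \<delta> f"
      unfolding locally_flat_on_def lip_near_def using assms(3,4) by simp
    then obtain \<delta> where "0 < \<delta>" "lip_near A z E \<delta> f" by blast
    then show ?thesis
      unfolding eventually_at_right_field using lip_near_mono by (intro exI[of _ \<delta>]) auto
  qed
  then have "\<forall>\<^sub>F \<delta> in at_right 0. \<forall>f\<in>F. lip_near A z E \<delta> f"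
    by (intro eventually_ball_finite[OF assms(1)] ballI)
  then have "\<forall>\<^sub>F \<delta> in at_right 0. 0 < \<delta> \<and> (\<forall>f\<in>F. lip_near A z E \<delta> f)"
    using eventually_at_right_less by (rule eventually_conj[rotated])
  then show ?thesis using eventually_happens'[of "at_right (0::real)"] by auto
qed

definition bump :: "real \<Rightarrow> nat \<Rightarrow> pt \<Rightarrow> real" where
  "bump E n z = (if z \<in> MM \<and> snd z = 1/2^n then max 0 (1/2^(n+1) - E * fst z) else 0)"

lemma bump_off_level: "snd z \<noteq> 1/2^n \<Longrightarrow> bump E n z = 0"
  unfolding bump_def by simp

lemma bump_bounds:
  assumes "0 \<le> E"
  shows "0 \<le> bump E n z" "bump E n z \<le> 1/2^(n+1)"
  using assms MM_coords(1)[of z] unfolding bump_def by auto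

lemma bump_same_level:
  assumes "0 \<le> E" "u \<in> MM" "v \<in> MM" "snd u = snd v"
  shows "\<bar>bump E n u - bump E n v\<bar> \<le> E * dM u v"
proof (cases "snd u = 1/2^n")
  case True
  let ?s = "1/2^(n+1) :: real"
  have "\<bar>bump E n u - bump E n v\<bar> = \<bar>max 0 (?s - E * fst u) - max 0 (?s - E * fst v)\<bar>"
    using True assms unfolding bump_def by simp
  also have "\<dots> \<le> \<bar>(?s - E * fst u) - (?s - E * fst v)\<bar>" by (auto simp: max_def)
  also have "\<dots> = \<bar>E * (fst u - fst v)\<bar>" by (simp add: algebra_simps)
  also have "\<dots> = E * dM u v" using assms by (simp add: dM_same_level abs_mult)
  finally show ?thesis .
qed (use assms dM_nonneg in \<open>simp add: bump_off_level\<close>)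

lemma bump_cross_level:
  assumes "n \<ge> 1" "0 \<le> E" "u \<in> MM" "v \<in> MM" "snd u = 1/2^n" "snd v \<noteq> snd u"
  shows "\<bar>bump E n u - bump E n v\<bar> \<le> dM u v"
proof -
  have "\<bar>bump E n u - bump E n v\<bar> \<le> 1/2^(n+1)"
    using bump_bounds[OF assms(2), of n u] bump_off_level[of v n] assms(5,6) by simp
  also have "\<dots> \<le> \<bar>snd u - snd v\<bar>" using level_separation[OF assms(4,1)] assms(5,6) by simp
  also have "\<dots> \<le> dM u v" using abs_snd_diff_le_dM[OF assms(3,4)] .
  finally show ?thesis .
qed

lemma bump_lipschitz:
  assumes "n \<ge> 1" "0 \<le> E" "E \<le> 1" "u \<in> MM" "v \<in> MM"
  shows "\<bar>bump E n u - bump E n v\<bar> \<le> dM u v"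
proof -
  consider "snd u = snd v" | "snd u = 1/2^n" "snd v \<noteq> snd u" | "snd v = 1/2^n" "snd u \<noteq> snd v"
    | "snd u \<noteq> 1/2^n" "snd v \<noteq> 1/2^n" by metis
  then show ?thesis
  proof cases
    case 1
    then have "\<bar>bump E n u - bump E n v\<bar> \<le> E * dM u v" using bump_same_level assms by blast
    also have "\<dots> \<le> dM u v" using assms dM_nonneg by (simp add: mult_left_le_one_le)
    finally show ?thesis .
  next
    case 2
    then show ?thesis using bump_cross_level assms by blast
  next
    case 3
    then show ?thesis using bump_cross_level[of n E v u] assms by (simp add: dM_sym abs_minus_commute)
  next
    case 4
    then show ?thesis using dM_nonneg[OF assms(4,5)] by (simp add: bump_off_level)
  qed
qed

lemma bump_in_Lip0:
  assumes "n \<ge> 1" "0 \<le> E" "E \<le> 1"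
  shows "bump E n \<in> Lip0"
proof -
  have "bump E n pP = 0" by (simp add: bump_off_level pP_def)
  moreover have "\<forall>z. z \<notin> MM \<longrightarrow> bump E n z = 0" by (simp add: bump_def)
  moreover have "\<forall>x\<in>MM. \<forall>y\<in>MM. \<bar>bump E n x - bump E n y\<bar> \<le> 1 * dM x y"
    using bump_lipschitz[OF assms] by simp
  ultimately show ?thesis unfolding Lip0_def by blast
qed

lemma lipc_bump:
  assumes "n \<ge> 1" "0 \<le> E" "E \<le> 1"
  shows "lipc MM (bump E n) = 1"
proof (rule antisym)
  show "lipc MM (bump E n) \<le> 1"
    using lipc_least[OF _ pP_qQ_in_MM, of "bump E n" 1] bump_lipschitz[OF assms] by simp
next
  define u where "u = (0::real, 1/2^n :: real)"
  define w where "w = (0::real, 1/2^(n+1) :: real)"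
  have "u \<in> MM" "w \<in> MM"
    using level_point_in_MM[of n 0] level_point_in_MM[of "n+1" 0] assms(1) by (simp_all add: u_def w_def)
  moreover have "u \<noteq> w" unfolding u_def w_def by simp
  ultimately have "\<bar>bump E n u - bump E n w\<bar> / dM u w \<le> lipc MM (bump E n)"
    using lipc_upper[of MM u w "bump E n" 1] bump_lipschitz[OF assms] by simp
  moreover have "bump E n u = 1/2^(n+1)" "bump E n w = 0" "dM u w = 1/2^(n+1)"
    using \<open>u \<in> MM\<close> by (auto simp: bump_def u_def w_def dM_axis)
  ultimately show "1 \<le> lipc MM (bump E n)" by simp
qed

lemma bump_levels_tendsto:
  "(\<lambda>m. lipc (SS m) (\<lambda>z. bump E n z - bump E n qQ * hh z)) \<longlonglongrightarrow> 0"
proof (rule tendsto_eventually, rule eventually_sequentiallyI)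
  fix m assume "n + 1 \<le> m"
  then have "(2::real)^m \<noteq> 2^n" by (simp add: power_inject_exp)
  then have "bump E n z = 0" if "z \<in> SS m" for z
    using that by (intro bump_off_level) (auto simp: SS_def)
  moreover have "bump E n qQ = 0" by (simp add: bump_off_level qQ_def)
  moreover have "(0, 1/2^m) \<in> SS m" "(1, 1/2^m) \<in> SS m"
    unfolding SS_def by (auto intro!: exI[of _ 0] exI[of _ "2^m"])
  ultimately show "lipc (SS m) (\<lambda>z. bump E n z - bump E n qQ * hh z) = 0"
    by (intro lipc_eq_0[of "(0, 1/2^m)" _ "(1, 1/2^m)"]) auto
qed

lemma locally_flat_on_isolated_support:
  assumes "A \<subseteq> MM" "0 < r" "\<And>w. w \<in> A \<Longrightarrow> w \<noteq> a \<Longrightarrow> r \<le> dM w a \<and> f w = 0"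
  shows "locally_flat_on A f"
  unfolding locally_flat_on_def
proof (intro ballI allI impI)
  fix z e assume z: "z \<in> A" and "(0::real) < e"
  show "\<exists>\<delta>>0. \<forall>x\<in>A. \<forall>y\<in>A. x \<noteq> y \<and> dM x z < \<delta> \<and> dM y z < \<delta> \<longrightarrow> \<bar>f x - f y\<bar> \<le> e * dM x y"
  proof (cases "z = a")
    case True
    have "x = a" if "x \<in> A" "dM x z < r" for x
    proof (rule ccontr)
      assume "x \<noteq> a"
      then show False using assms(3)[OF that(1)] that(2) True by simp
    qed
    then show ?thesis using assms(2) by (intro exI[of _ r]) auto
  next
    case False
    have "\<bar>f x - f y\<bar> \<le> e * dM x y"
      if "x \<in> A" "y \<in> A" "dM x z < dM z a" "dM y z < dM z a" for x y
    proof -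
      have "x \<noteq> a" "y \<noteq> a" using that(3,4) dM_sym[of a z] by auto
      moreover have "0 \<le> dM x y" using that(1,2) assms(1) dM_nonneg by blast
      ultimately show ?thesis using that(1,2) assms(3) \<open>0 < e\<close> by simp
    qed
    moreover have "0 < dM z a" using assms(2) assms(3)[OF z False] by linarith
    ultimately show ?thesis by blast
  qed
qed

lemma bump_locally_flat:
  assumes "n \<ge> 1" "1/2^(n+1) \<le> E"
  shows "locally_flat_on VV (bump E n)"
proof (rule locally_flat_on_isolated_support[where a = "(0, 1/2^n)"])
  show "VV \<subseteq> MM" "0 < (1::real)/2^(n+1)" unfolding VV_def by auto
next
  fix w assume w: "w \<in> VV" "w \<noteq> (0, 1/2^n)"
  then have "w \<in> MM" and fst_w: "fst w = 0 \<or> fst w = 1" unfolding VV_def by auto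
  show "1/2^(n+1) \<le> dM w (0, 1/2^n) \<and> bump E n w = 0"
  proof (cases "snd w = 1/2^n")
    case True
    then have "fst w = 1" using w(2) fst_w by (auto simp: prod_eq_iff)
    moreover have "(1::real)/2^(n+1) \<le> 1" using one_le_power[of "2::real" "n+1"] by simp
    ultimately show ?thesis using True assms(2) by (simp add: dM_same_level bump_def)
  next
    case False
    then show ?thesis using level_separation[OF \<open>w \<in> MM\<close> assms(1)] abs_snd_diff_le_dM[of w "(0, 1/2^n)"]
      \<open>w \<in> MM\<close> level_point_in_MM[of n 0] assms(1) by (simp add: bump_off_level abs_minus_commute)
  qed
qed

lemma bump_in_YY:
  assumes "n \<ge> 1" "1/2^(n+1) \<le> E" "E \<le> 1"
  shows "bump E n \<in> YY"
proof -
  have "(0::real) < 1/2^(n+1)" by simp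
  then have "0 \<le> E" using assms(2) by linarith
  then show ?thesis unfolding YY_def
    using bump_in_Lip0 bump_levels_tendsto bump_locally_flat assms by blast
qed

lemma axis_comparison:
  assumes f1: "\<forall>x\<in>MM. \<forall>y\<in>MM. \<bar>f x - f y\<bar> \<le> dM x y"
    and flat: "lip_near VV pP E \<delta> f"
    and u: "u \<in> MM" "snd u < \<delta>" and v: "v \<in> MM" "snd v < \<delta>" and uv: "snd u \<noteq> snd v"
  shows "\<bar>f u - f v\<bar> \<le> fst u + fst v + E * \<bar>snd u - snd v\<bar>"
proof -
  let ?u0 = "(0, snd u)" and ?v0 = "(0, snd v)"
  have V: "?u0 \<in> VV" "?v0 \<in> VV" using axis_point_in_VV u(1) v(1) by auto
  then have M: "?u0 \<in> MM" "?v0 \<in> MM" unfolding VV_def by auto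
  have "dM ?u0 pP < \<delta>" "dM ?v0 pP < \<delta>"
    using u v MM_coords(3) by (simp_all add: pP_def dM_axis)
  then have "\<bar>f ?u0 - f ?v0\<bar> \<le> E * dM ?u0 ?v0"
    using flat V uv unfolding lip_near_def by blast
  then have "\<bar>f ?u0 - f ?v0\<bar> \<le> E * \<bar>snd u - snd v\<bar>" by (simp add: dM_axis)
  moreover have "\<bar>f u - f ?u0\<bar> \<le> fst u" "\<bar>f v - f ?v0\<bar> \<le> fst v"
    using f1[rule_format, OF u(1) M(1)] f1[rule_format, OF v(1) M(2)] MM_coords(1)[OF u(1)] MM_coords(1)[OF v(1)]
    by (simp_all add: dM_same_level)
  ultimately show ?thesis by linarith
qed

text \<open>If E d(u, v) exceeds the bump height 2^(-n-1), the bump is absorbed by the slack.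
  Otherwise u lies within 2^(-n-1)/E of the left axis, both points lie below height
  2^(-n) + 2^(-n-1)/E < \<delta>, and in the route through the axis the vertical leg
  |snd u - snd v| is at least the bump height.\<close>
lemma lipschitz_add_bump_cross_level:
  assumes n: "n \<ge> 1" and E: "0 < E" "1/2^n \<le> E" and \<delta>: "1/2^(n+1) * (2 + 1/E) < \<delta>"
    and f1: "\<forall>x\<in>MM. \<forall>y\<in>MM. \<bar>f x - f y\<bar> \<le> dM x y"
    and flat: "lip_near VV pP E \<delta> f"
    and u: "u \<in> MM" "snd u = 1/2^n" and v: "v \<in> MM" "snd v \<noteq> snd u"
  shows "\<bar>f u - f v\<bar> + \<bar>bump E n u - bump E n v\<bar> \<le> (1 + E) * dM u v"
proof -
  define s :: real where "s = 1/2^(n+1)"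
  have s2: "2 * s = 1/2^n" unfolding s_def by simp
  have gv: "bump E n v = 0" using v(2) u(2) by (simp add: bump_off_level)
  have gu: "0 \<le> bump E n u" "bump E n u \<le> s" using bump_bounds E(1) s_def by auto
  have gap: "s \<le> \<bar>snd u - snd v\<bar>" using level_separation[OF v(1) n] u(2) v(2) s_def by simp
  have fuv: "\<bar>f u - f v\<bar> \<le> dM u v" using f1 u(1) v(1) by blast
  have d0: "0 \<le> dM u v" using dM_nonneg[OF u(1) v(1)] .
  consider "bump E n u = 0" | "s \<le> E * dM u v" | "0 < bump E n u" "E * dM u v < s"
    using gu by linarith
  then show ?thesis
  proof cases
    case 1
    moreover have "0 \<le> E * dM u v" using d0 E(1) by simp
    ultimately show ?thesis using gv fuv by (simp add: distrib_right)
  next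
    case 2
    then show ?thesis using gv gu fuv by (simp add: distrib_right)
  next
    case 3
    have "2 * s \<le> E" using E(2) s2 by simp
    then have sE: "s / E \<le> 1/2" using E(1) by (simp add: divide_simps)
    have "E * fst u < s" using 3(1) u unfolding bump_def by (auto simp: s_def)
    then have "fst u < s / E" using E(1) by (simp add: pos_less_divide_eq mult.commute)
    then have "fst u \<le> 1/2" using sE by linarith
    moreover have d: "dM u v < s / E" using 3(2) E(1) by (simp add: pos_less_divide_eq mult.commute)
    ultimately have "fst u + fst v \<le> 1"
      using fst_add_le_one_if_close[OF u(1) v(1)] v(2) sE by simp
    then have d_eq: "dM u v = \<bar>snd u - snd v\<bar> + fst u + fst v"
      using dM_diff_level v(2) by simp
    have "s * (2 + 1/E) < \<delta>" using \<delta> s_def by simp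
    then have "2 * s + s / E < \<delta>" by (simp add: algebra_simps)
    moreover have "snd v \<le> 2 * s + dM u v"
      using abs_snd_diff_le_dM[OF u(1) v(1)] u(2) s2 by linarith
    moreover have "0 < s / E" using E(1) s_def by simp
    ultimately have "snd u < \<delta>" "snd v < \<delta>" using s2 u(2) d by linarith+
    then have "\<bar>f u - f v\<bar> \<le> fst u + fst v + E * \<bar>snd u - snd v\<bar>"
      using axis_comparison[OF f1 flat u(1) _ v(1)] v(2) by auto
    moreover have "0 \<le> E * fst u" "0 \<le> E * fst v"
      using E(1) MM_coords(1)[OF u(1)] MM_coords(1)[OF v(1)] by auto
    ultimately show ?thesis using d_eq gv gu gap by (simp add: algebra_simps)
  qed
qed

lemma lipschitz_add_bump:
  assumes n: "n \<ge> 1" and E: "0 < E" "1/2^n \<le> E" and \<delta>: "1/2^(n+1) * (2 + 1/E) < \<delta>"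
    and f1: "\<forall>x\<in>MM. \<forall>y\<in>MM. \<bar>f x - f y\<bar> \<le> dM x y"
    and flat: "lip_near VV pP E \<delta> f"
    and u: "u \<in> MM" and v: "v \<in> MM"
  shows "\<bar>f u - f v\<bar> + \<bar>bump E n u - bump E n v\<bar> \<le> (1 + E) * dM u v"
proof -
  note cross = lipschitz_add_bump_cross_level[OF n E \<delta> f1 flat]
  consider "snd u = snd v" | "snd u = 1/2^n" "snd v \<noteq> snd u" | "snd v = 1/2^n" "snd u \<noteq> snd v"
    | "snd u \<noteq> 1/2^n" "snd v \<noteq> 1/2^n" by metis
  then show ?thesis
  proof cases
    case 1
    then show ?thesis
      using f1[rule_format, OF u v] bump_same_level[of E u v n] E(1) u v by (simp add: distrib_right)
  next
    case 2
    then show ?thesis using cross u v by blast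
  next
    case 3
    then show ?thesis using cross[OF v _ u] by (simp add: dM_sym abs_minus_commute)
  next
    case 4
    moreover have "0 \<le> E * dM u v" using dM_nonneg[OF u v] E(1) by simp
    ultimately show ?thesis using f1[rule_format, OF u v] by (simp add: bump_off_level distrib_right)
  qed
qed

lemma lipc_add_bump_le:
  assumes n: "n \<ge> 1" and E: "0 < E" "1/2^n \<le> E" and \<delta>: "1/2^(n+1) * (2 + 1/E) < \<delta>"
    and f: "f \<in> Lip0" "lipc MM f \<le> 1" and flat: "lip_near VV pP E \<delta> f" and c: "\<bar>c\<bar> \<le> 1"
  shows "lipc MM (\<lambda>z. f z + c * bump E n z) \<le> 1 + E"
proof (rule lipc_least[OF _ pP_qQ_in_MM])
  have f1: "\<forall>x\<in>MM. \<forall>y\<in>MM. \<bar>f x - f y\<bar> \<le> dM x y"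
  proof (intro ballI)
    fix x y assume xy: "x \<in> MM" "y \<in> MM"
    have "\<bar>f x - f y\<bar> \<le> lipc MM f * dM x y" using Lip0_lipschitz[OF f(1) xy] .
    also have "\<dots> \<le> 1 * dM x y" using f(2) dM_nonneg[OF xy] by (rule mult_right_mono)
    finally show "\<bar>f x - f y\<bar> \<le> dM x y" by simp
  qed
  fix x y assume xy: "x \<in> MM" "y \<in> MM"
  have "\<bar>c * (bump E n x - bump E n y)\<bar> \<le> \<bar>bump E n x - bump E n y\<bar>"
    using c by (simp add: abs_mult mult_left_le_one_le)
  then show "\<bar>(f x + c * bump E n x) - (f y + c * bump E n y)\<bar> \<le> (1 + E) * dM x y"
    using lipschitz_add_bump[OF n E \<delta> f1 flat xy] abs_triangle_ineq[of "f x - f y"]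
    by (simp add: algebra_simps)
qed simp

lemma exists_level_below:
  fixes E \<delta> :: real
  assumes "0 < E" "0 < \<delta>"
  shows "\<exists>n\<ge>1. 1/2^n \<le> E \<and> 1/2^(n+1) * (2 + 1/E) < \<delta>"
proof -
  have "0 < 2 + 1/E" using assms(1) by (simp add: add_pos_pos)
  then have "0 < min E (\<delta> / (2 + 1/E))" using assms by simp
  then have "\<exists>N. (1/2::real)^N < min E (\<delta> / (2 + 1/E))" by (rule real_arch_pow_inv) simp
  then obtain N where N: "1/2^N < E" "1/2^N < \<delta> / (2 + 1/E)" by (auto simp: power_divide)
  have le: "(1::real)/2^(N+2) \<le> 1/2^N" "(1::real)/2^(N+1) \<le> 1/2^N" by (simp_all add: field_simps)
  have "1/2^(N+2) * (2 + 1/E) < \<delta>"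
    using N(2) mult_right_mono[OF le(1), of "2 + 1/E"] \<open>0 < 2 + 1/E\<close> by (simp add: pos_less_divide_eq)
  then show ?thesis using N(1) le(2) by (intro exI[of _ "N+1"]) auto
qed

theorem proposition2p6:
  shows "almost_square YY (lipc MM)"
  unfolding almost_square_def
proof (intro allI impI)
  fix F :: "(pt \<Rightarrow> real) set" and \<epsilon> :: real
  assume F: "finite F \<and> F \<subseteq> {f \<in> YY. lipc MM f = 1}" and "0 < \<epsilon>"
  define E where "E = min \<epsilon> 1"
  have E: "0 < E" "E \<le> 1" "E \<le> \<epsilon>" using \<open>0 < \<epsilon>\<close> by (auto simp: E_def)
  have "pP \<in> VV" using pP_qQ_in_MM(1) by (simp add: VV_def pP_def)
  then obtain \<delta> where "0 < \<delta>" and flat: "\<forall>f\<in>F. lip_near VV pP E \<delta> f"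
    using locally_flat_on_uniform[of F VV pP E] F E(1) by (auto simp: YY_def)
  obtain n where n: "n \<ge> 1" "1/2^n \<le> E" "1/2^(n+1) * (2 + 1/E) < \<delta>"
    using exists_level_below E(1) \<open>0 < \<delta>\<close> by blast
  have "(1::real)/2^(n+1) \<le> 1/2^n" by (simp add: field_simps)
  then have g: "bump E n \<in> YY" "lipc MM (bump E n) = 1"
    using bump_in_YY lipc_bump n(1,2) E(1,2) by auto
  have add: "lipc MM (\<lambda>z. f z + c * bump E n z) \<le> 1 + \<epsilon>" if "f \<in> F" "\<bar>c\<bar> \<le> 1" for f c
  proof -
    have "f \<in> Lip0" "lipc MM f = 1" using F that(1) by (auto simp: YY_def)
    then have "lipc MM (\<lambda>z. f z + c * bump E n z) \<le> 1 + E"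
      using lipc_add_bump_le[OF n(1) E(1) n(2,3)] flat that by simp
    then show ?thesis using E(3) by linarith
  qed
  show "\<exists>g\<in>YY. lipc MM g = 1 \<and>
      (\<forall>f\<in>F. lipc MM (\<lambda>z. f z + g z) \<le> 1 + \<epsilon> \<and> lipc MM (\<lambda>z. f z - g z) \<le> 1 + \<epsilon>)"
  proof (intro bexI[OF _ g(1)] conjI g(2) ballI)
    fix f assume "f \<in> F"
    show "lipc MM (\<lambda>z. f z + bump E n z) \<le> 1 + \<epsilon>" using add[OF \<open>f \<in> F\<close>, of 1] by simp
    show "lipc MM (\<lambda>z. f z - bump E n z) \<le> 1 + \<epsilon>" using add[OF \<open>f \<in> F\<close>, of "-1"] by simp
  qed
qed

end
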